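(* Let $A \in \mathbb{R}^{m \times r}$, $b \in \mathbb{R}^m$, $P = \{ x \in \mathbb{R}^r \mid Ax \ge b\}$, let $x \in P$, and let $O \subset \mathbb{R}^r$ be a closed orthant with $x \in O$. Then $x$ is convex-conformally non-decomposable in $P$ if and only if $x$ is a vertex of $P \cap O$.
   Context: For $x \in \mathbb{R}^n$, $\operatorname{sign}(x) \in \{-,0,+\}^n$ is obtained by applying the sign function componentwise; the relations $0<-$, $0<+$ induce a componentwise partial order on $\{-,0,+\}^n$. For $X \in \{-,0,+\}^r$, the corresponding closed orthant is $O = \{ x \in \mathbb{R}^r \mid \operatorname{sign}(x) \le X\}$. A vector $x \in P$ is convex-conformally non-decomposable in $P$ if for all $x^1,x^2 \in P$ with $\operatorname{sign}(x^1),\operatorname{sign}(x^2) \le \operatorname{sign}(x)$ and all $0<\lambda<1$, $x = \lambda x^1 + (1-\lambda)x^2$ implies $x^1 = x^2$. For a polyhedron $Q$, $x \in Q$ is a vertex if for all $x^1, x^2 \in Q$ and $0<\lambda<1$, $x = \lambda x^1 + (1-\lambda) x^2$ implies $x^1 = x^2$. *)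

theory Defs
  imports "HOL-Analysis.Analysis"
begin

datatype sign = Neg | Zero | Pos

definition sign_of :: "real \<Rightarrow> sign" where
  "sign_of a = (if a < 0 then Neg else if a = 0 then Zero else Pos)"

definition sign_le :: "sign \<Rightarrow> sign \<Rightarrow> bool" where
  "sign_le s t \<longleftrightarrow> s = Zero \<or> s = t"

definition sign_vec_le :: "real^'r \<Rightarrow> ('r \<Rightarrow> sign) \<Rightarrow> bool" where
  "sign_vec_le y X \<longleftrightarrow> (\<forall>i. sign_le (sign_of (y $ i)) (X i))"

definition sign_vec :: "real^'r \<Rightarrow> ('r \<Rightarrow> sign)" where
  "sign_vec x = (\<lambda>i. sign_of (x $ i))"

definition orthant :: "('r \<Rightarrow> sign) \<Rightarrow> (real^'r) set" where
  "orthant X = {y. sign_vec_le y X}"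

definition polyhedron :: "real^'r^'m \<Rightarrow> real^'m \<Rightarrow> (real^'r) set" where
  "polyhedron A b = {x. \<forall>i. (A *v x) $ i \<ge> b $ i}"

definition cc_nondecomposable :: "(real^'r) set \<Rightarrow> real^'r \<Rightarrow> bool" where
  "cc_nondecomposable P x \<longleftrightarrow> x \<in> P \<and>
     (\<forall>x1\<in>P. \<forall>x2\<in>P. \<forall>t::real.
        sign_vec_le x1 (sign_vec x) \<and> sign_vec_le x2 (sign_vec x) \<and> 0 < t \<and> t < 1 \<and>
        x = t *\<^sub>R x1 + (1 - t) *\<^sub>R x2 \<longrightarrow> x1 = x2)"

definition is_vertex :: "(real^'r) set \<Rightarrow> real^'r \<Rightarrow> bool" where
  "is_vertex Q x \<longleftrightarrow> x \<in> Q \<and>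
     (\<forall>x1\<in>Q. \<forall>x2\<in>Q. \<forall>t::real. 0 < t \<and> t < 1 \<and>
        x = t *\<^sub>R x1 + (1 - t) *\<^sub>R x2 \<longrightarrow> x1 = x2)"

end

theory Submission
  imports Defs
begin

text \<open>Inside a closed orthant, two points whose open segment contains x have their
  sign vectors bounded by that of x; conversely everything sign-bounded by a point
  of the orthant lies in the orthant. Hence the decompositions of x that
  convex-conformal non-decomposability forbids are exactly the decompositions
  within P \<inter> O that being a vertex forbids.\<close>

lemma sign_le_trans: "sign_le a b \<Longrightarrow> sign_le b c \<Longrightarrow> sign_le a c"
  by (auto simp: sign_le_def)

lemma sign_le_sign_of_convex_combination:
  fixes c d t :: real
  assumes "sign_le (sign_of c) s" "sign_le (sign_of d) s" "0 < t" "t < 1"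
  shows "sign_le (sign_of c) (sign_of (t * c + (1 - t) * d))"
proof -
  have "t * c > 0" if "c > 0" using that assms by simp
  moreover have "t * c < 0" if "c < 0" using that assms by (simp add: mult_pos_neg)
  moreover have "(1 - t) * d \<ge> 0" if "d \<ge> 0" using that assms by simp
  moreover have "(1 - t) * d \<le> 0" if "d \<le> 0" using that assms by (simp add: mult_nonneg_nonpos)
  ultimately show ?thesis
    using assms(1,2) by (cases s) (auto simp: sign_le_def sign_of_def split: if_splits)
qed

lemma orthant_sign_vec_le:
  assumes "sign_vec_le y (sign_vec x)" "x \<in> orthant X"
  shows "y \<in> orthant X"
  using assms sign_le_trans unfolding orthant_def sign_vec_le_def sign_vec_def by blast

lemma sign_vec_le_convex_combination:
  assumes "x1 \<in> orthant X" "x2 \<in> orthant X" "0 < t" "t < 1"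
  shows "sign_vec_le x1 (sign_vec (t *\<^sub>R x1 + (1 - t) *\<^sub>R x2))"
  using assms sign_le_sign_of_convex_combination[of "x1 $ i" "X i" "x2 $ i" t for i]
  by (simp add: orthant_def sign_vec_le_def sign_vec_def)

lemma cc_nondecomposable_iff_vertex_inter_orthant:
  assumes "x \<in> orthant X"
  shows "cc_nondecomposable P x \<longleftrightarrow> is_vertex (P \<inter> orthant X) x"
proof
  assume cc: "cc_nondecomposable P x"
  show "is_vertex (P \<inter> orthant X) x"
    unfolding is_vertex_def
  proof (intro conjI ballI allI impI)
    show "x \<in> P \<inter> orthant X" using cc assms by (simp add: cc_nondecomposable_def)
  next
    fix x1 x2 t
    assume x1: "x1 \<in> P \<inter> orthant X" and x2: "x2 \<in> P \<inter> orthant X"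
      and seg: "0 < t \<and> t < 1 \<and> x = t *\<^sub>R x1 + (1 - t) *\<^sub>R x2"
    have "sign_vec_le x1 (sign_vec x)"
      using seg x1 x2 sign_vec_le_convex_combination[of x1 X x2 t] by auto
    moreover have "sign_vec_le x2 (sign_vec x)"
      using seg x1 x2 sign_vec_le_convex_combination[of x2 X x1 "1 - t"]
      by (auto simp: add.commute)
    ultimately show "x1 = x2" using cc x1 x2 seg by (auto simp: cc_nondecomposable_def)
  qed
next
  assume v: "is_vertex (P \<inter> orthant X) x"
  show "cc_nondecomposable P x"
    unfolding cc_nondecomposable_def
  proof (intro conjI ballI allI impI)
    show "x \<in> P" using v by (simp add: is_vertex_def)
  next
    fix x1 x2 t
    assume "x1 \<in> P" "x2 \<in> P"
      and seg: "sign_vec_le x1 (sign_vec x) \<and> sign_vec_le x2 (sign_vec x) \<and> 0 < t \<and> t < 1 \<and>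
        x = t *\<^sub>R x1 + (1 - t) *\<^sub>R x2"
    moreover have "x1 \<in> orthant X" "x2 \<in> orthant X"
      using seg assms orthant_sign_vec_le by blast+
    ultimately show "x1 = x2" using v by (auto simp: is_vertex_def)
  qed
qed

theorem proposition6:
  fixes A :: "real^'r^'m" and b :: "real^'m" and x :: "real^'r" and X :: "'r \<Rightarrow> sign"
  assumes "x \<in> polyhedron A b"
    and "x \<in> orthant X"
  shows "cc_nondecomposable (polyhedron A b) x \<longleftrightarrow>
         is_vertex (polyhedron A b \<inter> orthant X) x"
  using assms(2) by (rule cc_nondecomposable_iff_vertex_inter_orthant)

end
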